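(* Let $k$ be as in the context. For every $\rho\in(0,\log\sqrt3)$ there exist $\lambda_\rho^+>0$, $\lambda_\rho^-<0$ and $u_\rho^+,u_\rho^-\in C[0,1]$ with $\|u_\rho^\pm\|_\infty=\rho$ such that $(\lambda,u)=(\lambda_\rho^\pm,u_\rho^\pm)$ solves \[ u(t)=\lambda\int_0^1k(t,s)\,\frac{\sin(\tfrac32\pi s)e^{u(s)}}{\int_0^1e^{u(x)}\,dx}\,ds,\qquad t\in[0,1], \] equivalently the Neumann problem $u''(t)+\frac{\pi^2}{4}u(t)=\lambda\,\sin(\tfrac32\pi t)e^{u(t)}/\int_0^1e^{u(x)}dx$ on $(0,1)$, $u'(0)=u'(1)=0$. Moreover every pair $(\lambda,u)\in\mathbb{R}\times C[0,1]$ with $\|u\|_\infty=\rho$ solving this integral equation satisfies \[ |\lambda|\le\frac{4\pi^2\rho}{9e^{-2\rho}-e^{2\rho}}. \]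
   Context: $k(t,s)=\frac2\pi\cos(\frac\pi2(1-s))\cos(\frac\pi2 t)$ for $0\le t\le s\le 1$ and $k(t,s)=\frac2\pi\cos(\frac\pi2(1-t))\cos(\frac\pi2 s)$ for $0\le s\le t\le 1$. *)

theory Defs
  imports "HOL-Analysis.Analysis"
begin

definition kern :: "real \<Rightarrow> real \<Rightarrow> real" where
  "kern t s = (if t \<le> s
     then 2 / pi * cos (pi / 2 * (1 - s)) * cos (pi / 2 * t)
     else 2 / pi * cos (pi / 2 * (1 - t)) * cos (pi / 2 * s))"

definition supnorm01 :: "(real \<Rightarrow> real) \<Rightarrow> real" where
  "supnorm01 u = (SUP t\<in>{0..1}. \<bar>u t\<bar>)"

definition solves :: "real \<Rightarrow> (real \<Rightarrow> real) \<Rightarrow> bool" where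
  "solves lam u \<longleftrightarrow> continuous_on {0..1} u \<and>
     (\<forall>t\<in>{0..1}. u t = lam * integral {0..1}
        (\<lambda>s. kern t s * (sin (3 / 2 * pi * s) * exp (u s) / integral {0..1} (\<lambda>x. exp (u x)))))"

end

theory Submission
  imports Defs "HOL-Homology.Brouwer_Degree" "HOL-Complex_Analysis.Great_Picard"
begin

(* Write H u t for the integral over s in [0,1] of k(t,s) sin(3 pi s / 2) e^(u s) / (integral of e^u),
   and ||.|| for the sup norm on [0,1].  On the ball of radius r in C[0,1] the density
   e^u / (integral of e^u) lies between e^(-2r) and e^(2r), while k(1,s) sin(3 pi s / 2) changes sign
   only at s = 2/3; this gives H u 1 >= beta r = (9 e^(-2r) - e^(2r)) / (4 pi^2), which is positive
   for r < log (sqrt 3).  Hence a solution with ||u|| = rho satisfies |lambda| beta rho <= |u 1| <= rho.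
   For existence, u |-> c H u / ||H u|| with c = +-rho maps the rho-ball into itself, is Lipschitz in t
   uniformly in u, and is Lipschitz in u for the sup norm.  A Schauder-type argument (Brouwer's theorem
   for piecewise linear interpolants at the nodes j/m, then Arzela-Ascoli) gives a fixed point y, and
   (c / ||H y||, y) is a solution with ||y|| = rho.  Brouwer's theorem in every dimension follows from
   the non-contractibility of spheres. *)

section \<open>Brouwer's fixed point theorem in every finite dimension\<close>

text \<open>Points of \<open>\<real>\<^bsup>n+1\<^esup>\<close> are functions on \<open>nat\<close> vanishing beyond \<open>n\<close>, as in \<^const>\<open>nsphere\<close>.\<close>

definition euclidean_disc :: "nat \<Rightarrow> (nat \<Rightarrow> real) set" where
  "euclidean_disc n = {x. (\<Sum>i\<le>n. (x i)\<^sup>2) \<le> 1 \<and> (\<forall>i>n. x i = 0)}"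

definition euclidean_sphere :: "nat \<Rightarrow> (nat \<Rightarrow> real) set" where
  "euclidean_sphere n = {x. (\<Sum>i\<le>n. (x i)\<^sup>2) = 1 \<and> (\<forall>i>n. x i = 0)}"

definition sphere_normalize :: "nat \<Rightarrow> (nat \<Rightarrow> real) \<Rightarrow> nat \<Rightarrow> real" where
  "sphere_normalize n x = (\<lambda>i. x i / sqrt (\<Sum>j\<le>n. (x j)\<^sup>2))"

lemma not_contractible_euclidean_sphere: "\<not> contractible (euclidean_sphere n)"
proof -
  have "nsphere n = top_of_set (euclidean_sphere n)"
    by (simp add: nsphere euclidean_sphere_def euclidean_product_topology)
  then show ?thesis
    using non_contractible_space_nsphere[of n] by simp
qed

lemma homotopic_with_canon_intro:
  fixes h :: "real \<times> 'a::topological_space \<Rightarrow> 'b::topological_space"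
  assumes "continuous_on ({0..1} \<times> S) h" "h \<in> {0..1} \<times> S \<rightarrow> T"
    and "\<And>x. x \<in> S \<Longrightarrow> h (0, x) = f x" "\<And>x. x \<in> S \<Longrightarrow> h (1, x) = g x"
  shows "homotopic_with_canon (\<lambda>h. True) S T f g"
proof -
  have "({0..1} \<times> UNIV) \<inter> ({0..1} \<times> S) = {0..1::real} \<times> S" by auto
  then show ?thesis
    using assms
    by (auto simp: homotopic_with prod_topology_subtopology subtopology_subtopology intro!: exI[of _ h])
qed

lemma sum_squares_pos_iff:
  fixes x :: "nat \<Rightarrow> real"
  shows "(\<Sum>i\<le>n. (x i)\<^sup>2) > 0 \<longleftrightarrow> (\<exists>i\<le>n. x i \<noteq> 0)"
proof
  assume "(\<Sum>i\<le>n. (x i)\<^sup>2) > 0"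
  then show "\<exists>i\<le>n. x i \<noteq> 0" by (metis (no_types, lifting) atMost_iff power_zero_numeral sum.neutral less_irrefl)
next
  assume "\<exists>i\<le>n. x i \<noteq> 0"
  then obtain i where "i \<le> n" "x i \<noteq> 0" by blast
  have "0 < (x i)\<^sup>2" using \<open>x i \<noteq> 0\<close> by simp
  also have "\<dots> \<le> (\<Sum>i\<le>n. (x i)\<^sup>2)"
    using \<open>i \<le> n\<close> by (intro member_le_sum) auto
  finally show "(\<Sum>i\<le>n. (x i)\<^sup>2) > 0" .
qed

lemma sphere_normalize_in_euclidean_sphere:
  assumes "\<exists>i\<le>n. x i \<noteq> 0" "\<forall>i>n. x i = 0"
  shows "sphere_normalize n x \<in> euclidean_sphere n"
proof -
  have pos: "(\<Sum>j\<le>n. (x j)\<^sup>2) > 0"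
    using assms(1) sum_squares_pos_iff by blast
  have "(\<Sum>i\<le>n. (sphere_normalize n x i)\<^sup>2) = 1"
    using pos by (simp add: sphere_normalize_def power_divide flip: sum_divide_distrib)
  moreover have "\<forall>i>n. sphere_normalize n x i = 0"
    using assms(2) by (simp add: sphere_normalize_def)
  ultimately show ?thesis
    by (simp add: euclidean_sphere_def)
qed

lemma sphere_normalize_euclidean_sphere:
  "x \<in> euclidean_sphere n \<Longrightarrow> sphere_normalize n x = x"
  by (simp add: euclidean_sphere_def sphere_normalize_def)

lemma continuous_on_sphere_normalize:
  assumes "continuous_on S v" "\<And>x. x \<in> S \<Longrightarrow> \<exists>i\<le>n. v x i \<noteq> 0"
  shows "continuous_on S (\<lambda>x. sphere_normalize n (v x))"
proof -
  have "continuous_on S (\<lambda>x. v x i)" for i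
    using assms(1) by (rule continuous_on_product_then_coordinatewise)
  moreover have "sqrt (\<Sum>j\<le>n. (v x j)\<^sup>2) \<noteq> 0" if "x \<in> S" for x
    using assms(2)[OF that] sum_squares_pos_iff[of "v x" n] by simp
  ultimately show ?thesis
    unfolding sphere_normalize_def by (intro continuous_intros) auto
qed

lemma continuous_on_component: "continuous_on S (\<lambda>x. x i)"
  by (rule continuous_on_subset[OF continuous_on_product_coordinates]) simp

lemma scaled_sphere_in_euclidean_disc:
  assumes "\<bar>c\<bar> \<le> 1" "x \<in> euclidean_sphere n"
  shows "(\<lambda>i. c * x i) \<in> euclidean_disc n"
proof -
  have "(\<Sum>i\<le>n. (c * x i)\<^sup>2) = c\<^sup>2"
    using assms by (simp add: power_mult_distrib euclidean_sphere_def flip: sum_distrib_left)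
  also have "\<dots> \<le> 1"
    using assms by (simp add: abs_square_le_1)
  finally show ?thesis
    using assms by (simp add: euclidean_disc_def euclidean_sphere_def)
qed

lemma in_euclidean_disc_if_small:
  assumes "\<And>i. i \<le> m \<Longrightarrow> \<bar>y i\<bar> \<le> 1 / (real m + 1)" "\<And>i. m < i \<Longrightarrow> y i = 0"
  shows "y \<in> euclidean_disc m"
proof -
  have "(y i)\<^sup>2 \<le> (1 / (real m + 1))\<^sup>2" if "i \<le> m" for i
    using power_mono[OF assms(1)[OF that] abs_ge_zero, of 2] by simp
  then have "(\<Sum>i\<le>m. (y i)\<^sup>2) \<le> (\<Sum>i\<le>m. (1 / (real m + 1))\<^sup>2)"
    by (intro sum_mono) simp
  also have "\<dots> = 1 / (real m + 1)"
    by (simp add: power2_eq_square add.commute)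
  also have "\<dots> \<le> 1"
    by simp
  finally show ?thesis
    using assms(2) by (simp add: euclidean_disc_def)
qed

lemma homotopic_disc_map_const:
  assumes contg: "continuous_on (euclidean_disc n) g" and g: "g \<in> euclidean_disc n \<rightarrow> euclidean_sphere n"
  shows "homotopic_with_canon (\<lambda>h. True) (euclidean_sphere n) (euclidean_sphere n) g (\<lambda>x. g (\<lambda>i. 0))"
proof (rule homotopic_with_canon_intro[where h = "\<lambda>z. g (\<lambda>i. (1 - fst z) * snd z i)"])
  have shrink: "(\<lambda>i. (1 - fst z) * snd z i) \<in> euclidean_disc n" if "z \<in> {0..1} \<times> euclidean_sphere n" for z
    using that by (intro scaled_sphere_in_euclidean_disc) auto
  then show "continuous_on ({0..1} \<times> euclidean_sphere n) (\<lambda>z. g (\<lambda>i. (1 - fst z) * snd z i))"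
    by (intro continuous_on_compose2[OF contg] continuous_on_coordinatewise_then_product
        continuous_intros continuous_on_compose2[OF continuous_on_component continuous_on_snd]) auto
  show "(\<lambda>z. g (\<lambda>i. (1 - fst z) * snd z i)) \<in> {0..1} \<times> euclidean_sphere n \<rightarrow> euclidean_sphere n"
    using shrink g by blast
qed auto

lemma euclidean_sphere_ne_scaled_disc:
  assumes x: "x \<in> euclidean_sphere n" and y: "y \<in> euclidean_disc n" and t: "0 \<le> t" "t < 1"
  shows "\<exists>i\<le>n. x i - t * y i \<noteq> 0"
proof (rule ccontr)
  assume "\<not> ?thesis"
  then have "1 = (\<Sum>i\<le>n. (t * y i)\<^sup>2)"
    using x by (simp add: euclidean_sphere_def)
  also have "\<dots> = t\<^sup>2 * (\<Sum>i\<le>n. (y i)\<^sup>2)"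
    by (simp add: power_mult_distrib sum_distrib_left)
  also have "\<dots> \<le> t\<^sup>2"
    using y by (intro mult_left_le) (auto simp: euclidean_disc_def)
  also have "\<dots> < 1"
    using t by (simp add: power_less_one_iff)
  finally show False
    by simp
qed

theorem brouwer_euclidean_disc:
  assumes contf: "continuous_on (euclidean_disc n) f"
    and f_disc: "f \<in> euclidean_disc n \<rightarrow> euclidean_disc n"
  shows "\<exists>x\<in>euclidean_disc n. f x = x"
proof (rule ccontr)
  assume no_fixpoint: "\<not> ?thesis"
  have sphere_disc: "euclidean_sphere n \<subseteq> euclidean_disc n"
    by (auto simp: euclidean_sphere_def euclidean_disc_def)
  have contf_i: "continuous_on (euclidean_disc n) (\<lambda>x. f x i)" for i
    by (rule continuous_on_product_then_coordinatewise[OF contf])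
  have support: "x i - t * f x i = 0" if "x \<in> euclidean_disc n" "i > n" for x t i
    using that f_disc by (auto simp: euclidean_disc_def)
  have moved: "\<exists>i\<le>n. x i - f x i \<noteq> 0" if "x \<in> euclidean_disc n" for x
    using no_fixpoint that support[OF that, of _ 1] by (metis eq_iff_diff_eq_0 ext mult_1 not_le)
  have differ: "\<exists>i\<le>n. x i - t * f x i \<noteq> 0" if "t \<in> {0..1}" "x \<in> euclidean_sphere n" for x t
    using that moved[of x] sphere_disc f_disc euclidean_sphere_ne_scaled_disc[of x n "f x" t]
    by (cases "t = 1") auto
  define g where "g x = sphere_normalize n (\<lambda>i. x i - f x i)" for x
  have id_g: "homotopic_with_canon (\<lambda>h. True) (euclidean_sphere n) (euclidean_sphere n) id g"
  proof (rule homotopic_with_canon_intro[where h = "\<lambda>z. sphere_normalize n (\<lambda>i. snd z i - fst z * f (snd z) i)"])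
    have "continuous_on ({0..1} \<times> euclidean_sphere n) (\<lambda>z. f (snd z) i)" for i
      using sphere_disc by (intro continuous_on_compose2[OF contf_i continuous_on_snd]) auto
    then show "continuous_on ({0..1} \<times> euclidean_sphere n)
        (\<lambda>z. sphere_normalize n (\<lambda>i. snd z i - fst z * f (snd z) i))"
      using differ
      by (intro continuous_on_sphere_normalize continuous_on_coordinatewise_then_product
          continuous_intros continuous_on_compose2[OF continuous_on_component continuous_on_snd]) auto
    show "(\<lambda>z. sphere_normalize n (\<lambda>i. snd z i - fst z * f (snd z) i))
        \<in> {0..1} \<times> euclidean_sphere n \<rightarrow> euclidean_sphere n"
      using sphere_disc differ support by (auto intro!: sphere_normalize_in_euclidean_sphere)
  qed (auto simp: g_def sphere_normalize_euclidean_sphere)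
  have "continuous_on (euclidean_disc n) g"
    unfolding g_def using moved
    by (intro continuous_on_sphere_normalize continuous_on_coordinatewise_then_product
        continuous_intros continuous_on_component contf_i) auto
  moreover have "g \<in> euclidean_disc n \<rightarrow> euclidean_sphere n"
    using moved support[where t = 1] by (auto simp: g_def intro!: sphere_normalize_in_euclidean_sphere)
  ultimately have "contractible (euclidean_sphere n)"
    unfolding contractible_def using homotopic_with_trans[OF id_g homotopic_disc_map_const] by blast
  with not_contractible_euclidean_sphere show False
    by blast
qed

section \<open>A Schauder-type fixed point theorem in \<open>C[0,1]\<close>\<close>

definition C01_ball :: "real \<Rightarrow> (real \<Rightarrow> real) set" where
  "C01_ball r = {u. continuous_on {0..1} u \<and> (\<forall>t\<in>{0..1}. \<bar>u t\<bar> \<le> r)}"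

lemma C01_ballD:
  assumes "u \<in> C01_ball r"
  shows "continuous_on {0..1} u" "t \<in> {0..1} \<Longrightarrow> \<bar>u t\<bar> \<le> r"
  using assms by (auto simp: C01_ball_def)

lemma lipschitz_in_C01_ball:
  assumes "\<And>t. t \<in> {0..1} \<Longrightarrow> \<bar>u t\<bar> \<le> r"
    and lip: "\<And>t t'. t \<in> {0..1} \<Longrightarrow> t' \<in> {0..1} \<Longrightarrow> \<bar>u t - u t'\<bar> \<le> L * \<bar>t - t'\<bar>"
  shows "u \<in> C01_ball r"
proof -
  have "0 \<le> L"
    using lip[of 0 1] abs_ge_zero[of "u 0 - u 1"] by simp
  then have "lipschitz_on L {0..1} u"
    using lip by (intro lipschitz_onI) (simp_all add: dist_real_def)
  then show ?thesis
    using assms(1) lipschitz_on_continuous_on by (auto simp: C01_ball_def)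
qed

lemma abs_convex_combination_le:
  fixes w y :: "'a \<Rightarrow> real"
  assumes "finite A" "\<And>j. j \<in> A \<Longrightarrow> 0 \<le> w j" "sum w A = 1"
    and "\<And>j. j \<in> A \<Longrightarrow> w j \<noteq> 0 \<Longrightarrow> \<bar>y j\<bar> \<le> c"
  shows "\<bar>\<Sum>j\<in>A. w j * y j\<bar> \<le> c"
proof -
  have "\<bar>\<Sum>j\<in>A. w j * y j\<bar> \<le> (\<Sum>j\<in>A. \<bar>w j * y j\<bar>)"
    by (rule sum_abs)
  also have "\<dots> = (\<Sum>j\<in>A. w j * \<bar>y j\<bar>)"
    using assms(2) by (simp add: abs_mult)
  also have "\<dots> \<le> (\<Sum>j\<in>A. w j * c)"
    using assms(2,4) by (intro sum_mono) (metis mult_left_mono mult_zero_left order_refl)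
  also have "\<dots> = c"
    using assms(3) by (simp flip: sum_distrib_right)
  finally show ?thesis .
qed

definition tent :: "nat \<Rightarrow> nat \<Rightarrow> real \<Rightarrow> real" where
  "tent m j t = max 0 (1 - \<bar>real m * t - real j\<bar>)"

text \<open>Normalizing the tents spares proving that they already sum to one on \<open>[0,1]\<close>.\<close>

definition tent_weight :: "nat \<Rightarrow> nat \<Rightarrow> real \<Rightarrow> real" where
  "tent_weight m j t = tent m j t / (\<Sum>k\<le>m. tent m k t)"

definition interpolate :: "nat \<Rightarrow> (nat \<Rightarrow> real) \<Rightarrow> real \<Rightarrow> real" where
  "interpolate m y t = (\<Sum>j\<le>m. tent_weight m j t * y j)"

lemma sum_tent_pos:
  assumes "t \<in> {0..1}"
  shows "(\<Sum>k\<le>m. tent m k t) > 0"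
proof -
  define j where "j = nat \<lfloor>real m * t\<rfloor>"
  have "0 \<le> real m * t" "real m * t \<le> real m"
    using assms by (auto simp: mult_left_le)
  then have j: "real j \<le> real m * t" "real m * t < real j + 1" "j \<le> m"
    unfolding j_def by (auto simp: le_nat_iff floor_le_iff) linarith
  then have "0 < tent m j t"
    by (simp add: tent_def)
  also have "\<dots> \<le> (\<Sum>k\<le>m. tent m k t)"
    using j(3) by (intro member_le_sum) (auto simp: tent_def)
  finally show ?thesis .
qed

lemma tent_weight_nonneg: "t \<in> {0..1} \<Longrightarrow> 0 \<le> tent_weight m j t"
  using sum_tent_pos[of t m] by (simp add: tent_weight_def tent_def)

lemma sum_tent_weight: "t \<in> {0..1} \<Longrightarrow> (\<Sum>j\<le>m. tent_weight m j t) = 1"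
  using sum_tent_pos[of t m] by (simp add: tent_weight_def flip: sum_divide_distrib)

lemma tent_weight_support:
  assumes "1 \<le> m" "tent_weight m j t \<noteq> 0"
  shows "\<bar>real j / real m - t\<bar> < 1 / real m"
proof -
  have "\<bar>real m * t - real j\<bar> < 1"
    using assms(2) by (auto simp: tent_weight_def tent_def max_def split: if_splits)
  moreover have "real m * t - real j = - (real m * (real j / real m - t))"
    using assms(1) by (simp add: field_simps)
  ultimately show ?thesis
    using assms(1) by (simp add: abs_mult field_simps)
qed

lemma continuous_on_tent_weight: "continuous_on {0..1} (tent_weight m j)"
proof -
  have "continuous_on {0..1} (tent m k)" for k
    unfolding tent_def by (intro continuous_intros)
  moreover have "(\<Sum>k\<le>m. tent m k t) \<noteq> 0" if "t \<in> {0..1}" for t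
    using sum_tent_pos[OF that, of m] by simp
  ultimately show ?thesis
    unfolding tent_weight_def by (intro continuous_intros) auto
qed

lemma abs_interpolate_le:
  assumes "t \<in> {0..1}" "\<And>j. j \<le> m \<Longrightarrow> \<bar>y j\<bar> \<le> c"
  shows "\<bar>interpolate m y t\<bar> \<le> c"
  unfolding interpolate_def using assms
  by (intro abs_convex_combination_le tent_weight_nonneg sum_tent_weight) auto

lemma interpolate_diff: "interpolate m y t - interpolate m z t = interpolate m (\<lambda>j. y j - z j) t"
  by (simp add: interpolate_def right_diff_distrib sum_subtractf)

lemma interpolate_in_C01_ball:
  assumes "\<And>j. j \<le> m \<Longrightarrow> \<bar>y j\<bar> \<le> r"
  shows "interpolate m y \<in> C01_ball r"
proof -
  have "continuous_on {0..1} (interpolate m y)"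
    unfolding interpolate_def by (intro continuous_intros continuous_on_tent_weight)
  then show ?thesis
    using abs_interpolate_le assms by (auto simp: C01_ball_def)
qed

lemma continuous_on_lipschitz_coordinates:
  fixes \<phi> :: "(nat \<Rightarrow> real) \<Rightarrow> real"
  assumes "\<And>a b. a \<in> S \<Longrightarrow> b \<in> S \<Longrightarrow> \<bar>\<phi> b - \<phi> a\<bar> \<le> C * (\<Sum>j\<le>m. \<bar>b j - a j\<bar>)"
  shows "continuous_on S \<phi>"
  unfolding continuous_on_def
proof
  fix a assume a: "a \<in> S"
  have "filterlim (\<lambda>b. b j) (nhds (a j)) (at a within S)" for j
    using continuous_on_component[of S j] a by (simp add: continuous_on_def)
  then have "filterlim (\<lambda>b. C * (\<Sum>j\<le>m. \<bar>b j - a j\<bar>)) (nhds (C * (\<Sum>j\<le>m. \<bar>a j - a j\<bar>))) (at a within S)"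
    by (intro tendsto_intros)
  then have "filterlim (\<lambda>b. C * (\<Sum>j\<le>m. \<bar>b j - a j\<bar>)) (nhds 0) (at a within S)"
    by simp
  moreover have "\<forall>\<^sub>F b in at a within S. norm (\<phi> b - \<phi> a) \<le> C * (\<Sum>j\<le>m. \<bar>b j - a j\<bar>)"
    using assms[OF a] by (simp add: eventually_at_filter)
  ultimately have "filterlim (\<lambda>b. \<phi> b - \<phi> a) (nhds 0) (at a within S)"
    by (rule Lim_null_comparison[rotated])
  then show "filterlim \<phi> (nhds (\<phi> a)) (at a within S)"
    by (simp add: Lim_null[of \<phi>])
qed

lemma equilipschitz_uniformly_convergent_subsequence:
  fixes f :: "nat \<Rightarrow> real \<Rightarrow> real"
  assumes bounded: "\<And>n t. t \<in> {0..1} \<Longrightarrow> \<bar>f n t\<bar> \<le> r"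
    and lipschitz: "\<And>n t t'. t \<in> {0..1} \<Longrightarrow> t' \<in> {0..1} \<Longrightarrow> \<bar>f n t - f n t'\<bar> \<le> L * \<bar>t - t'\<bar>"
  obtains g k where "g \<in> C01_ball r" "strict_mono (k :: nat \<Rightarrow> nat)"
    "\<And>e. 0 < e \<Longrightarrow> \<exists>N. \<forall>n\<ge>N. \<forall>t\<in>{0..1}. \<bar>f (k n) t - g t\<bar> < e"
proof -
  have equicont: "\<exists>d>0. \<forall>n t'. t' \<in> {0..1} \<and> norm (t - t') < d \<longrightarrow> norm (f n t - f n t') < e"
    if "t \<in> {0..1}" "0 < e" for t e
  proof (intro exI[of _ "e / (\<bar>L\<bar> + 1)"] conjI allI impI)
    show "0 < e / (\<bar>L\<bar> + 1)"
      using that by simp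
    fix n t' assume t': "t' \<in> {0..1} \<and> norm (t - t') < e / (\<bar>L\<bar> + 1)"
    have "norm (f n t - f n t') \<le> L * \<bar>t - t'\<bar>"
      using lipschitz[of t t' n] that t' by simp
    also have "\<dots> \<le> \<bar>L\<bar> * \<bar>t - t'\<bar>"
      by (intro mult_right_mono) auto
    also have "\<dots> \<le> \<bar>L\<bar> * (e / (\<bar>L\<bar> + 1))"
      using t' by (intro mult_left_mono) auto
    also have "\<dots> < e"
      using that by (simp add: field_simps)
    finally show "norm (f n t - f n t') < e" .
  qed
  have bounded_norm: "norm (f n t) \<le> r" if "t \<in> {0..1}" for n t
    using bounded[OF that] by simp
  obtain g k where g: "continuous_on {0..1} g" and k: "strict_mono (k :: nat \<Rightarrow> nat)"
    and lim: "\<And>e. 0 < e \<Longrightarrow> \<exists>N. \<forall>n t. n \<ge> N \<and> t \<in> {0..1} \<longrightarrow> norm (f (k n) t - g t) < e"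
    using Arzela_Ascoli[of "{0..1}" f r, OF compact_Icc bounded_norm equicont] by blast
  have "\<bar>g t\<bar> \<le> r" if t: "t \<in> {0..1}" for t
  proof (rule field_le_epsilon)
    fix e :: real assume "0 < e"
    then obtain N where "\<forall>n t. n \<ge> N \<and> t \<in> {0..1} \<longrightarrow> norm (f (k n) t - g t) < e"
      using lim by blast
    then have "\<bar>f (k N) t - g t\<bar> < e"
      using t by auto
    then show "\<bar>g t\<bar> \<le> r + e"
      using bounded[OF t, of "k N"] by linarith
  qed
  then have "g \<in> C01_ball r"
    using g by (simp add: C01_ball_def)
  moreover have "\<exists>N. \<forall>n\<ge>N. \<forall>t\<in>{0..1}. \<bar>f (k n) t - g t\<bar> < e" if "0 < e" for e
    using lim[OF that] unfolding real_norm_def by blast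
  ultimately show ?thesis
    using that k by blast
qed

definition clip :: "real \<Rightarrow> real \<Rightarrow> real" where
  "clip r y = max (- r) (min r y)"

lemma abs_clip_le: "0 \<le> r \<Longrightarrow> \<bar>clip r y\<bar> \<le> r"
  by (simp add: clip_def)

lemma clip_eq_self: "\<bar>y\<bar> \<le> r \<Longrightarrow> clip r y = y"
  by (simp add: clip_def abs_le_iff)

lemma abs_clip_diff_le: "\<bar>clip r y - clip r z\<bar> \<le> \<bar>y - z\<bar>"
  by (simp add: clip_def max_def min_def abs_if)

lemma abs_interpolate_clip_diff_le:
  assumes "0 \<le> K" "t \<in> {0..1}"
  shows "\<bar>interpolate m (\<lambda>j. clip r (K * b j)) t - interpolate m (\<lambda>j. clip r (K * a j)) t\<bar>
    \<le> K * (\<Sum>j\<le>m. \<bar>b j - a j\<bar>)"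
  unfolding interpolate_diff
proof (rule abs_interpolate_le[OF assms(2)])
  fix j assume "j \<le> m"
  have "\<bar>clip r (K * b j) - clip r (K * a j)\<bar> \<le> K * \<bar>b j - a j\<bar>"
    using abs_clip_diff_le[of r "K * b j" "K * a j"] assms(1) by (simp add: abs_mult flip: right_diff_distrib)
  also have "\<dots> \<le> K * (\<Sum>j\<le>m. \<bar>b j - a j\<bar>)"
    using assms(1) \<open>j \<le> m\<close> by (intro mult_left_mono member_le_sum) auto
  finally show "\<bar>clip r (K * b j) - clip r (K * a j)\<bar> \<le> K * (\<Sum>j\<le>m. \<bar>b j - a j\<bar>)" .
qed

locale C01_ball_self_map =
  fixes T :: "(real \<Rightarrow> real) \<Rightarrow> real \<Rightarrow> real" and r L C :: real
  assumes radius_pos: "0 < r"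
    and bounded: "\<And>u t. u \<in> C01_ball r \<Longrightarrow> t \<in> {0..1} \<Longrightarrow> \<bar>T u t\<bar> \<le> r"
    and lipschitz_arg: "\<And>u t t'. u \<in> C01_ball r \<Longrightarrow> t \<in> {0..1} \<Longrightarrow> t' \<in> {0..1} \<Longrightarrow>
      \<bar>T u t - T u t'\<bar> \<le> L * \<bar>t - t'\<bar>"
    and lipschitz_fun: "\<And>u v d t. u \<in> C01_ball r \<Longrightarrow> v \<in> C01_ball r \<Longrightarrow>
      (\<And>s. s \<in> {0..1} \<Longrightarrow> \<bar>u s - v s\<bar> \<le> d) \<Longrightarrow> t \<in> {0..1} \<Longrightarrow> \<bar>T u t - T v t\<bar> \<le> C * d"
begin

lemma zero_in_C01_ball: "(\<lambda>_. 0) \<in> C01_ball r"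
  using radius_pos by (simp add: C01_ball_def)

lemma lipschitz_arg_nonneg: "0 \<le> L"
  using lipschitz_arg[OF zero_in_C01_ball, of 0 1] abs_ge_zero[of "T (\<lambda>_. 0) 0 - T (\<lambda>_. 0) 1"]
  by simp

lemma lipschitz_fun_nonneg: "0 \<le> C"
  using lipschitz_fun[OF zero_in_C01_ball zero_in_C01_ball, of 1 0] by simp

lemma exists_interpolation_fixed_point:
  assumes m: "1 \<le> m"
  shows "\<exists>x\<in>C01_ball r. x = interpolate m (\<lambda>j. T x (real j / real m))"
proof -
  \<comment> \<open>Brouwer on the coefficients: interpolate the clipped values \<open>K a\<^sub>j\<close> and evaluate \<open>T\<close> at the nodes;
    dividing by \<open>K\<close> keeps the image in the unit disc.\<close>
  define K where "K = r * (real m + 1)"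
  have K: "0 < K"
    using radius_pos by (simp add: K_def)
  define X where "X a = interpolate m (\<lambda>j. clip r (K * a j))" for a :: "nat \<Rightarrow> real"
  define G where "G a = (\<lambda>i. if i \<le> m then T (X a) (real i / real m) / K else 0)" for a
  have X: "X a \<in> C01_ball r" for a
    unfolding X_def using abs_clip_le radius_pos by (intro interpolate_in_C01_ball) auto
  have nodes: "real i / real m \<in> {0..1}" if "i \<le> m" for i
    using m that by (auto simp: field_simps)
  have "G a \<in> euclidean_disc m" for a
  proof (rule in_euclidean_disc_if_small)
    fix i assume "i \<le> m"
    then have "\<bar>G a i\<bar> \<le> r / K"
      using bounded[OF X nodes] K by (simp add: G_def divide_right_mono)
    then show "\<bar>G a i\<bar> \<le> 1 / (real m + 1)"
      using radius_pos by (simp add: K_def)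
  qed (simp add: G_def)
  moreover have "continuous_on (euclidean_disc m) (\<lambda>a. G a i)" for i
  proof (cases "i \<le> m")
    case True
    show ?thesis
    proof (rule continuous_on_lipschitz_coordinates[where C = C and m = m])
      fix a b :: "nat \<Rightarrow> real"
      have "\<bar>X b s - X a s\<bar> \<le> K * (\<Sum>j\<le>m. \<bar>b j - a j\<bar>)" if "s \<in> {0..1}" for s
        unfolding X_def using K that by (intro abs_interpolate_clip_diff_le) auto
      then have "\<bar>T (X b) (real i / real m) - T (X a) (real i / real m)\<bar> \<le> C * (K * (\<Sum>j\<le>m. \<bar>b j - a j\<bar>))"
        by (intro lipschitz_fun X nodes True)
      then show "\<bar>G b i - G a i\<bar> \<le> C * (\<Sum>j\<le>m. \<bar>b j - a j\<bar>)"
        using True K by (simp add: G_def field_simps flip: diff_divide_distrib)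
    qed
  qed (simp add: G_def)
  ultimately obtain a where a: "G a = a"
    using brouwer_euclidean_disc[of m G] continuous_on_coordinatewise_then_product by blast
  have "clip r (K * a j) = T (X a) (real j / real m)" if "j \<le> m" for j
  proof -
    have "K * a j = T (X a) (real j / real m)"
      using fun_cong[OF a, of j] that K by (auto simp: G_def field_simps)
    then show ?thesis
      using bounded[OF X nodes[OF that]] by (simp add: clip_eq_self)
  qed
  then have "X a = interpolate m (\<lambda>j. T (X a) (real j / real m))"
    unfolding X_def interpolate_def by (intro ext sum.cong) auto
  then show ?thesis
    using X by blast
qed

lemma approximate_fixed_point:
  assumes m: "1 \<le> m"
  shows "\<exists>x\<in>C01_ball r. \<forall>t\<in>{0..1}. \<bar>x t - T x t\<bar> \<le> L / real m"
proof -
  obtain x where x: "x \<in> C01_ball r" and x_eq: "x = interpolate m (\<lambda>j. T x (real j / real m))"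
    using exists_interpolation_fixed_point[OF m] by blast
  have "\<bar>x t - T x t\<bar> \<le> L / real m" if t: "t \<in> {0..1}" for t
  proof -
    have "x t - T x t = (\<Sum>j\<le>m. tent_weight m j t * (T x (real j / real m) - T x t))"
      using sum_tent_weight[OF t, of m]
      by (subst x_eq) (simp add: interpolate_def right_diff_distrib sum_subtractf flip: sum_distrib_right)
    also have "\<bar>\<dots>\<bar> \<le> L / real m"
    proof (rule abs_convex_combination_le)
      fix j assume j: "j \<in> {..m}" and "tent_weight m j t \<noteq> 0"
      then have "\<bar>real j / real m - t\<bar> \<le> 1 / real m"
        using tent_weight_support[OF m] by fastforce
      moreover have "real j / real m \<in> {0..1}"
        using m j by (auto simp: field_simps)
      ultimately have "\<bar>T x (real j / real m) - T x t\<bar> \<le> L * (1 / real m)"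
        using lipschitz_arg[OF x _ t] lipschitz_arg_nonneg by (meson mult_left_mono order_trans)
      then show "\<bar>T x (real j / real m) - T x t\<bar> \<le> L / real m"
        by simp
    qed (use sum_tent_weight[OF t] tent_weight_nonneg[OF t] in auto)
    finally show ?thesis .
  qed
  then show ?thesis
    using x by blast
qed

lemma fixed_point_if_approximable:
  assumes y: "y \<in> C01_ball r" and t: "t \<in> {0..1}"
    and approx: "\<And>e. 0 < e \<Longrightarrow> \<exists>x\<in>C01_ball r. \<forall>s\<in>{0..1}. \<bar>x s - y s\<bar> \<le> e \<and> \<bar>T x s - y s\<bar> \<le> e"
  shows "T y t = y t"
proof -
  have "\<bar>T y t - y t\<bar> \<le> 0 + e" if e: "0 < e" for e
  proof -
    define \<delta> where "\<delta> = e / (C + 1)"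
    have C1: "0 < C + 1"
      using lipschitz_fun_nonneg by simp
    then have "0 < \<delta>"
      using e by (simp add: \<delta>_def)
    then obtain x where x: "x \<in> C01_ball r" and close: "\<forall>s\<in>{0..1}. \<bar>x s - y s\<bar> \<le> \<delta> \<and> \<bar>T x s - y s\<bar> \<le> \<delta>"
      using approx by blast
    have "\<bar>T x t - T y t\<bar> \<le> C * \<delta>"
      using close t by (intro lipschitz_fun x y) auto
    then have "\<bar>T y t - y t\<bar> \<le> (C + 1) * \<delta>"
      using close t by (fastforce simp: algebra_simps)
    also have "\<dots> = e"
      using C1 by (simp add: \<delta>_def)
    finally show ?thesis
      by simp
  qed
  then show ?thesis
    using field_le_epsilon[of "\<bar>T y t - y t\<bar>" 0] by simp
qed

theorem fixed_point: "\<exists>y\<in>C01_ball r. \<forall>t\<in>{0..1}. T y t = y t"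
proof -
  have "\<forall>n. \<exists>x\<in>C01_ball r. \<forall>t\<in>{0..1}. \<bar>x t - T x t\<bar> \<le> L / real (Suc n)"
    by (intro allI approximate_fixed_point) simp
  then obtain xs where xs: "\<And>n. xs n \<in> C01_ball r"
    and err: "\<And>n t. t \<in> {0..1} \<Longrightarrow> \<bar>xs n t - T (xs n) t\<bar> \<le> L / real (Suc n)"
    by metis
  obtain y k where y: "y \<in> C01_ball r" and k: "strict_mono (k :: nat \<Rightarrow> nat)"
    and conv: "\<And>e. 0 < e \<Longrightarrow> \<exists>N. \<forall>n\<ge>N. \<forall>t\<in>{0..1}. \<bar>T (xs (k n)) t - y t\<bar> < e"
    using equilipschitz_uniformly_convergent_subsequence[of "\<lambda>n. T (xs n)" r L]
      bounded[OF xs] lipschitz_arg[OF xs] by blast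
  have "\<exists>x\<in>C01_ball r. \<forall>s\<in>{0..1}. \<bar>x s - y s\<bar> \<le> e \<and> \<bar>T x s - y s\<bar> \<le> e" if e: "0 < e" for e
  proof -
    obtain N where N: "\<forall>n\<ge>N. \<forall>t\<in>{0..1}. \<bar>T (xs (k n)) t - y t\<bar> < e / 2"
      using conv[of "e / 2"] e by auto
    obtain N' :: nat where N': "L / (e / 2) < real N'"
      using reals_Archimedean2 by blast
    define n where "n = max N N'"
    have "L < e / 2 * real N'"
      using N' e by (simp add: field_simps)
    also have "\<dots> \<le> e / 2 * real (Suc (k n))"
      using seq_suble[OF k, of n] e by (intro mult_left_mono) (auto simp: n_def)
    finally have small: "L / real (Suc (k n)) \<le> e / 2"
      by (simp add: field_simps)
    have "\<bar>xs (k n) s - y s\<bar> \<le> e \<and> \<bar>T (xs (k n)) s - y s\<bar> \<le> e" if "s \<in> {0..1}" for s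
    proof -
      have "\<bar>T (xs (k n)) s - y s\<bar> < e / 2"
        using N that by (simp add: n_def)
      then show ?thesis
        using err[OF that, of "k n"] small by linarith
    qed
    then show ?thesis
      using xs by blast
  qed
  then show ?thesis
    using y fixed_point_if_approximable by blast
qed

end

lemma abs_cos_diff_le:
  fixes x y :: real
  shows "\<bar>cos x - cos y\<bar> \<le> \<bar>x - y\<bar>"
proof -
  have "\<bar>cos x - cos y\<bar> = 2 * \<bar>sin ((x + y) / 2)\<bar> * \<bar>sin ((y - x) / 2)\<bar>"
    by (simp add: cos_diff_cos abs_mult)
  also have "\<dots> \<le> 2 * 1 * \<bar>(y - x) / 2\<bar>"
    by (intro mult_mono abs_sin_x_le_abs_x) auto
  finally show ?thesis
    by simp
qed

lemma abs_exp_diff_le: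
  fixes x y :: real
  shows "\<bar>exp x - exp y\<bar> \<le> exp (max x y) * \<bar>x - y\<bar>"
proof -
  have *: "exp a - exp b \<le> exp a * (a - b)" for a b :: real
  proof -
    have "exp a * (1 + (b - a)) \<le> exp a * exp (b - a)"
      using exp_ge_add_one_self[of "b - a"] by (intro mult_left_mono) auto
    then show ?thesis
      by (simp add: exp_diff algebra_simps)
  qed
  show ?thesis
    using *[of x y] *[of y x] by (cases "x \<le> y") (simp_all add: max_def abs_if)
qed

lemma abs_mult_diff_le:
  fixes a b c d :: real
  assumes "\<bar>b\<bar> \<le> 1" "\<bar>c\<bar> \<le> 1"
  shows "\<bar>a * b - c * d\<bar> \<le> \<bar>a - c\<bar> + \<bar>b - d\<bar>"
proof -
  have "a * b - c * d = (a - c) * b + c * (b - d)"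
    by (simp add: algebra_simps)
  then have "\<bar>a * b - c * d\<bar> \<le> \<bar>a - c\<bar> * \<bar>b\<bar> + \<bar>c\<bar> * \<bar>b - d\<bar>"
    by (simp add: abs_triangle_ineq[THEN order_trans] flip: abs_mult)
  also have "\<dots> \<le> \<bar>a - c\<bar> * 1 + 1 * \<bar>b - d\<bar>"
    using assms by (intro add_mono mult_mono) auto
  finally show ?thesis
    by simp
qed

lemma abs_diff_divide_le:
  fixes A B P Q \<beta> :: real
  assumes "0 < \<beta>" "\<beta> \<le> P" "\<beta> \<le> Q"
  shows "\<bar>A / P - B / Q\<bar> \<le> \<bar>A - B\<bar> / \<beta> + \<bar>B\<bar> * \<bar>P - Q\<bar> / \<beta>\<^sup>2"
proof -
  have P: "0 < P" and Q: "0 < Q"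
    using assms by linarith+
  have "A / P - B / Q = (A - B) / P + B * (Q - P) / (P * Q)"
    using P Q by (simp add: field_simps)
  then have "\<bar>A / P - B / Q\<bar> \<le> \<bar>A - B\<bar> / P + \<bar>B\<bar> * \<bar>P - Q\<bar> / (P * Q)"
    using P Q by (simp add: abs_triangle_ineq[THEN order_trans] abs_mult abs_minus_commute)
  also have "\<dots> \<le> \<bar>A - B\<bar> / \<beta> + \<bar>B\<bar> * \<bar>P - Q\<bar> / (\<beta> * \<beta>)"
    using assms by (intro add_mono divide_left_mono mult_mono) auto
  finally show ?thesis
    by (simp add: power2_eq_square)
qed

lemma abs_integral_diff_le:
  fixes f g :: "real \<Rightarrow> real"
  assumes "continuous_on {0..1} f" "continuous_on {0..1} g"
    and "\<And>s. s \<in> {0..1} \<Longrightarrow> \<bar>f s - g s\<bar> \<le> c"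
  shows "\<bar>integral {0..1} f - integral {0..1} g\<bar> \<le> c"
proof -
  have "integral {0..1} f - integral {0..1} g = integral {0..1} (\<lambda>s. f s - g s)"
    using assms(1,2) by (simp add: integral_diff integrable_continuous_interval)
  also have "norm \<dots> \<le> c * (1 - 0)"
    by (rule integral_bound) (use assms in \<open>auto intro: continuous_on_diff\<close>)
  finally show ?thesis
    by simp
qed

section \<open>The Hammerstein operator of the problem\<close>

lemma kern_eq: "kern t s = 2 / pi * (cos (pi / 2 * (1 - max t s)) * cos (pi / 2 * min t s))"
  by (simp add: kern_def max_def min_def)

lemma continuous_on_kern: "continuous_on S (kern t)"
  unfolding kern_eq by (intro continuous_intros)

lemma abs_kern_le: "\<bar>kern t s\<bar> \<le> 1"
proof -
  have "\<bar>kern t s\<bar> \<le> 2 / pi * (1 * 1)"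
    unfolding kern_eq abs_mult by (intro mult_left_mono mult_mono) (auto simp: abs_cos_le_one)
  also have "\<dots> \<le> 1"
    using pi_ge_two by simp
  finally show ?thesis .
qed

lemma abs_cos_scaled_diff_le:
  fixes a b c :: real
  assumes "\<bar>a - b\<bar> \<le> d"
  shows "\<bar>cos (pi / 2 * (c - a)) - cos (pi / 2 * (c - b))\<bar> \<le> pi / 2 * d"
proof -
  have "\<bar>cos (pi / 2 * (c - a)) - cos (pi / 2 * (c - b))\<bar> \<le> \<bar>pi / 2 * (c - a) - pi / 2 * (c - b)\<bar>"
    by (rule abs_cos_diff_le)
  also have "\<dots> = \<bar>pi / 2 * (b - a)\<bar>"
    by (simp add: right_diff_distrib)
  also have "\<dots> = pi / 2 * \<bar>a - b\<bar>"
    by (simp add: abs_mult abs_minus_commute)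
  also have "\<dots> \<le> pi / 2 * d"
    using assms by (intro mult_left_mono) auto
  finally show ?thesis .
qed

lemma kern_lipschitz: "\<bar>kern t s - kern t' s\<bar> \<le> 2 * \<bar>t - t'\<bar>"
proof -
  define p where "p x = cos (pi / 2 * (1 - max x s)) * cos (pi / 2 * min x s)" for x
  have max: "\<bar>max t s - max t' s\<bar> \<le> \<bar>t - t'\<bar>" and min: "\<bar>min t s - min t' s\<bar> \<le> \<bar>t - t'\<bar>"
    by (auto simp: max_def min_def)
  have "\<bar>p t - p t'\<bar> \<le> \<bar>cos (pi / 2 * (1 - max t s)) - cos (pi / 2 * (1 - max t' s))\<bar>
      + \<bar>cos (pi / 2 * min t s) - cos (pi / 2 * min t' s)\<bar>"
    unfolding p_def by (intro abs_mult_diff_le abs_cos_le_one)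
  also have "\<dots> \<le> pi / 2 * \<bar>t - t'\<bar> + pi / 2 * \<bar>t - t'\<bar>"
    using abs_cos_scaled_diff_le[OF max, of 1] abs_cos_scaled_diff_le[OF min, of 0] by simp
  finally have p: "\<bar>p t - p t'\<bar> \<le> pi * \<bar>t - t'\<bar>"
    by simp
  have "kern t s - kern t' s = 2 / pi * (p t - p t')"
    by (simp add: kern_eq p_def right_diff_distrib)
  then have "\<bar>kern t s - kern t' s\<bar> = 2 / pi * \<bar>p t - p t'\<bar>"
    by (simp only: abs_mult) simp
  also have "\<dots> \<le> 2 / pi * (pi * \<bar>t - t'\<bar>)"
    using p by (intro mult_left_mono) auto
  finally show ?thesis
    by simp
qed

definition exp_integral :: "(real \<Rightarrow> real) \<Rightarrow> real" where
  "exp_integral u = integral {0..1} (\<lambda>x. exp (u x))"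

definition exp_density :: "(real \<Rightarrow> real) \<Rightarrow> real \<Rightarrow> real" where
  "exp_density u s = exp (u s) / exp_integral u"

definition hammerstein_op :: "(real \<Rightarrow> real) \<Rightarrow> real \<Rightarrow> real" where
  "hammerstein_op u t = integral {0..1} (\<lambda>s. kern t s * (sin (3 / 2 * pi * s) * exp_density u s))"

lemma solves_iff:
  "solves lam u \<longleftrightarrow> continuous_on {0..1} u \<and> (\<forall>t\<in>{0..1}. u t = lam * hammerstein_op u t)"
  by (simp add: solves_def hammerstein_op_def exp_density_def exp_integral_def)

lemma exp_integral_bounds:
  assumes "u \<in> C01_ball r"
  shows "exp (- r) \<le> exp_integral u" "exp_integral u \<le> exp r"
proof -
  have int: "(\<lambda>x. exp (u x)) integrable_on {0..1}"
    using C01_ballD(1)[OF assms] by (intro integrable_continuous_interval continuous_intros)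
  have lower: "exp (- r) \<le> exp (u x)" and upper: "exp (u x) \<le> exp r" if "x \<in> {0..1}" for x
    using C01_ballD(2)[OF assms that] by (auto simp: abs_le_iff)
  have "integral {0..1} (\<lambda>_::real. exp (- r)) \<le> exp_integral u"
    unfolding exp_integral_def by (intro integral_le int integrable_const_ivl lower)
  moreover have "exp_integral u \<le> integral {0..1} (\<lambda>_::real. exp r)"
    unfolding exp_integral_def by (intro integral_le int integrable_const_ivl upper)
  ultimately show "exp (- r) \<le> exp_integral u" "exp_integral u \<le> exp r"
    by simp_all
qed

lemma exp_integral_pos: "u \<in> C01_ball r \<Longrightarrow> 0 < exp_integral u"
  using exp_integral_bounds(1)[of u r] exp_gt_zero[of "- r"] by linarith

lemma exp_density_pos: "u \<in> C01_ball r \<Longrightarrow> 0 < exp_density u s"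
  using exp_integral_pos by (simp add: exp_density_def)

lemma continuous_on_exp_density:
  assumes "u \<in> C01_ball r"
  shows "continuous_on {0..1} (exp_density u)"
  unfolding exp_density_def using C01_ballD(1)[OF assms] exp_integral_pos[OF assms]
  by (intro continuous_intros) auto

lemma exp_density_bounds:
  assumes "u \<in> C01_ball r" "s \<in> {0..1}"
  shows "exp (- 2 * r) \<le> exp_density u s" "exp_density u s \<le> exp (2 * r)"
proof -
  have u: "- r \<le> u s" "u s \<le> r"
    using C01_ballD(2)[OF assms] by auto
  note Z = exp_integral_bounds[OF assms(1)] exp_integral_pos[OF assms(1)]
  have "exp (- r) / exp r \<le> exp_density u s"
    unfolding exp_density_def using u Z by (intro frac_le) auto
  then show "exp (- 2 * r) \<le> exp_density u s"
    by (simp add: exp_diff[symmetric])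
  have "exp_density u s \<le> exp r / exp (- r)"
    unfolding exp_density_def using u Z by (intro frac_le) auto
  then show "exp_density u s \<le> exp (2 * r)"
    by (simp add: exp_diff[symmetric])
qed

lemma abs_exp_diff_le_in_C01_ball:
  assumes "u \<in> C01_ball r" "v \<in> C01_ball r" "s \<in> {0..1}" "\<bar>u s - v s\<bar> \<le> d"
  shows "\<bar>exp (u s) - exp (v s)\<bar> \<le> exp r * d"
proof -
  have "max (u s) (v s) \<le> r"
    using C01_ballD(2)[OF assms(1,3)] C01_ballD(2)[OF assms(2,3)] by auto
  then have "exp (max (u s) (v s)) * \<bar>u s - v s\<bar> \<le> exp r * d"
    using assms(4) by (intro mult_mono) auto
  then show ?thesis
    using abs_exp_diff_le[of "u s" "v s"] by linarith
qed

lemma exp_density_lipschitz: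
  assumes u: "u \<in> C01_ball r" and v: "v \<in> C01_ball r"
    and d: "\<And>s. s \<in> {0..1} \<Longrightarrow> \<bar>u s - v s\<bar> \<le> d" and s: "s \<in> {0..1}"
  shows "\<bar>exp_density u s - exp_density v s\<bar> \<le> 2 * exp (4 * r) * d"
proof -
  have r: "0 \<le> r" and d0: "0 \<le> d"
    using C01_ballD(2)[OF u s] d[OF s] by linarith+
  have Z: "\<bar>exp_integral u - exp_integral v\<bar> \<le> exp r * d"
    unfolding exp_integral_def using C01_ballD(1)[OF u] C01_ballD(1)[OF v]
    by (intro abs_integral_diff_le continuous_intros abs_exp_diff_le_in_C01_ball[OF u v] d)
  have v_s: "\<bar>exp (v s)\<bar> \<le> exp r"
    using C01_ballD(2)[OF v s] by simp
  have "\<bar>exp_density u s - exp_density v s\<bar>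
      \<le> \<bar>exp (u s) - exp (v s)\<bar> / exp (- r) + \<bar>exp (v s)\<bar> * \<bar>exp_integral u - exp_integral v\<bar> / (exp (- r))\<^sup>2"
    unfolding exp_density_def
    by (rule abs_diff_divide_le[OF exp_gt_zero exp_integral_bounds(1)[OF u] exp_integral_bounds(1)[OF v]])
  also have "\<dots> \<le> exp r * d / exp (- r) + exp r * (exp r * d) / (exp (- r))\<^sup>2"
    using abs_exp_diff_le_in_C01_ball[OF u v s d[OF s]] v_s Z d0
    by (intro add_mono divide_right_mono mult_mono) auto
  also have "\<dots> = (exp (2 * r) + exp (4 * r)) * d"
    by (simp add: field_simps power2_eq_square flip: exp_add)
  also have "\<dots> \<le> 2 * exp (4 * r) * d"
    using r d0 by (intro mult_right_mono) auto
  finally show ?thesis .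
qed

lemma abs_source_le:
  assumes "u \<in> C01_ball r" "s \<in> {0..1}"
  shows "\<bar>sin (3 / 2 * pi * s) * exp_density u s\<bar> \<le> exp (2 * r)"
proof -
  have "\<bar>sin (3 / 2 * pi * s) * exp_density u s\<bar> = \<bar>sin (3 / 2 * pi * s)\<bar> * exp_density u s"
    using exp_density_pos[OF assms(1), of s] by (simp add: abs_mult)
  also have "\<dots> \<le> 1 * exp (2 * r)"
    using exp_density_bounds[OF assms] less_imp_le[OF exp_density_pos[OF assms(1)]] by (intro mult_mono) auto
  finally show ?thesis
    by simp
qed

lemma continuous_on_hammerstein_integrand:
  assumes "u \<in> C01_ball r"
  shows "continuous_on {0..1} (\<lambda>s. kern t s * (sin (3 / 2 * pi * s) * exp_density u s))"
  by (intro continuous_intros continuous_on_kern continuous_on_exp_density[OF assms])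

lemma abs_hammerstein_op_le:
  assumes "u \<in> C01_ball r"
  shows "\<bar>hammerstein_op u t\<bar> \<le> exp (2 * r)"
proof -
  have "\<bar>kern t s * (sin (3 / 2 * pi * s) * exp_density u s)\<bar> \<le> exp (2 * r)" if s: "s \<in> {0..1}" for s
    using mult_mono[OF abs_kern_le abs_source_le[OF assms s]] by (simp add: abs_mult)
  then have "norm (integral {0..1} (\<lambda>s. kern t s * (sin (3 / 2 * pi * s) * exp_density u s)))
      \<le> exp (2 * r) * (1 - 0)"
    by (intro integral_bound continuous_on_hammerstein_integrand[OF assms]) auto
  then show ?thesis
    by (simp add: hammerstein_op_def)
qed

lemma hammerstein_op_lipschitz_arg:
  assumes "u \<in> C01_ball r"
  shows "\<bar>hammerstein_op u t - hammerstein_op u t'\<bar> \<le> 2 * exp (2 * r) * \<bar>t - t'\<bar>"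
  unfolding hammerstein_op_def
proof (rule abs_integral_diff_le)
  fix s :: real assume s: "s \<in> {0..1}"
  have "\<bar>kern t s * (sin (3 / 2 * pi * s) * exp_density u s) - kern t' s * (sin (3 / 2 * pi * s) * exp_density u s)\<bar>
      = \<bar>kern t s - kern t' s\<bar> * \<bar>sin (3 / 2 * pi * s) * exp_density u s\<bar>"
    by (simp add: abs_mult flip: left_diff_distrib)
  also have "\<dots> \<le> (2 * \<bar>t - t'\<bar>) * exp (2 * r)"
    using abs_source_le[OF assms s] kern_lipschitz by (intro mult_mono) auto
  finally show "\<bar>kern t s * (sin (3 / 2 * pi * s) * exp_density u s) - kern t' s * (sin (3 / 2 * pi * s) * exp_density u s)\<bar>
      \<le> 2 * exp (2 * r) * \<bar>t - t'\<bar>"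
    by (simp add: mult_ac)
qed (use continuous_on_hammerstein_integrand[OF assms] in auto)

lemma hammerstein_op_lipschitz_fun:
  assumes u: "u \<in> C01_ball r" and v: "v \<in> C01_ball r"
    and d: "\<And>s. s \<in> {0..1} \<Longrightarrow> \<bar>u s - v s\<bar> \<le> d"
  shows "\<bar>hammerstein_op u t - hammerstein_op v t\<bar> \<le> 2 * exp (4 * r) * d"
  unfolding hammerstein_op_def
proof (rule abs_integral_diff_le)
  fix s :: real assume s: "s \<in> {0..1}"
  have "\<bar>kern t s * (sin (3 / 2 * pi * s) * exp_density u s) - kern t s * (sin (3 / 2 * pi * s) * exp_density v s)\<bar>
      = \<bar>kern t s\<bar> * \<bar>sin (3 / 2 * pi * s)\<bar> * \<bar>exp_density u s - exp_density v s\<bar>"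
    by (simp add: abs_mult flip: right_diff_distrib)
  also have "\<dots> \<le> 1 * 1 * (2 * exp (4 * r) * d)"
    using exp_density_lipschitz[OF u v d s] abs_kern_le by (intro mult_mono) auto
  finally show "\<bar>kern t s * (sin (3 / 2 * pi * s) * exp_density u s) - kern t s * (sin (3 / 2 * pi * s) * exp_density v s)\<bar>
      \<le> 2 * exp (4 * r) * d"
    by simp
qed (use continuous_on_hammerstein_integrand u v in auto)

section \<open>The lower bound at \<open>t = 1\<close>\<close>

definition profile_at_1 :: "real \<Rightarrow> real" where
  "profile_at_1 s = cos (pi / 2 * s) * sin (3 / 2 * pi * s)"

lemma profile_at_1_has_integral:
  assumes "a \<le> b"
  shows "(profile_at_1 has_integral
    ((cos (2 * pi * a) - cos (2 * pi * b)) / (4 * pi) + (cos (pi * a) - cos (pi * b)) / (2 * pi))) {a..b}"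
proof -
  define P where "P s = - (cos (2 * pi * s) / (4 * pi)) - cos (pi * s) / (2 * pi)" for s
  have "(P has_real_derivative profile_at_1 s) (at s)" for s
  proof -
    have "(P has_real_derivative (sin (2 * pi * s) * (2 * pi) / (4 * pi) + sin (pi * s) * pi / (2 * pi))) (at s)"
      unfolding P_def by (auto intro!: derivative_eq_intros simp: field_simps)
    moreover have "sin (2 * pi * s) + sin (pi * s) = 2 * profile_at_1 s"
    proof -
      have a: "2 * pi * s = 3 / 2 * pi * s + pi / 2 * s" and b: "pi * s = 3 / 2 * pi * s - pi / 2 * s"
        by (simp_all add: field_simps)
      show ?thesis
        unfolding profile_at_1_def by (subst a, subst b, simp only: sin_add sin_diff) (simp add: algebra_simps)
    qed
    ultimately show ?thesis
      by (simp add: field_simps)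
  qed
  then have "(profile_at_1 has_integral (P b - P a)) {a..b}"
    using assms by (intro fundamental_theorem_of_calculus)
      (auto intro: has_field_derivative_at_within simp: has_real_derivative_iff_has_vector_derivative[symmetric])
  moreover have "P b - P a
      = (cos (2 * pi * a) - cos (2 * pi * b)) / (4 * pi) + (cos (pi * a) - cos (pi * b)) / (2 * pi)"
    by (simp add: P_def diff_divide_distrib)
  ultimately show ?thesis
    by simp
qed

lemma cos_two_thirds_pi: "cos (pi * (2 / 3)) = - 1 / 2"
proof -
  have "cos (pi * (2 / 3)) = cos (pi - pi / 3)"
    by (rule arg_cong[of _ _ cos]) simp
  also have "\<dots> = - 1 / 2"
    by (simp only: cos_pi_minus cos_60)
  finally show ?thesis .
qed

lemma cos_four_thirds_pi: "cos (2 * pi * (2 / 3)) = - 1 / 2"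
proof -
  have "cos (2 * pi * (2 / 3)) = cos (pi / 3 + pi)"
    by (rule arg_cong[of _ _ cos]) simp
  also have "\<dots> = - 1 / 2"
    by (simp only: cos_periodic_pi cos_60)
  finally show ?thesis .
qed

lemma integral_profile_at_1_positive_part: "integral {0..2/3} profile_at_1 = 9 / (8 * pi)"
proof -
  have "integral {0..2/3} profile_at_1
      = (cos (2 * pi * 0) - cos (2 * pi * (2 / 3))) / (4 * pi) + (cos (pi * 0) - cos (pi * (2 / 3))) / (2 * pi)"
    by (rule integral_unique[OF profile_at_1_has_integral]) simp
  also have "\<dots> = 9 / (8 * pi)"
    by (simp only: cos_two_thirds_pi cos_four_thirds_pi mult_zero_right cos_zero) (simp add: field_simps)
  finally show ?thesis .
qed

lemma integral_profile_at_1_negative_part: "integral {2/3..1} profile_at_1 = - 1 / (8 * pi)"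
proof -
  have "integral {2/3..1} profile_at_1
      = (cos (2 * pi * (2 / 3)) - cos (2 * pi * 1)) / (4 * pi) + (cos (pi * (2 / 3)) - cos (pi * 1)) / (2 * pi)"
    by (rule integral_unique[OF profile_at_1_has_integral]) simp
  also have "\<dots> = - 1 / (8 * pi)"
    by (simp only: cos_two_thirds_pi cos_four_thirds_pi mult_1_right cos_two_pi cos_pi) (simp add: field_simps)
  finally show ?thesis .
qed

lemma profile_at_1_nonneg:
  assumes "s \<in> {0..2/3}"
  shows "0 \<le> profile_at_1 s"
proof -
  have "0 \<le> pi / 2 * s" "pi / 2 * s \<le> pi / 2 * 1" "0 \<le> pi * (3 / 2 * s)" "pi * (3 / 2 * s) \<le> pi * 1"
    using assms by (auto intro!: mult_left_mono)
  then have "0 \<le> cos (pi / 2 * s)" "0 \<le> sin (pi * (3 / 2 * s))"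
    by (intro cos_ge_zero sin_ge_zero; use pi_gt_zero in linarith)+
  then show ?thesis
    by (simp add: profile_at_1_def mult_ac)
qed

lemma profile_at_1_nonpos:
  assumes "s \<in> {2/3..1}"
  shows "profile_at_1 s \<le> 0"
proof -
  have "0 \<le> pi / 2 * s" "pi / 2 * s \<le> pi / 2 * 1" "pi * 1 \<le> pi * (3 / 2 * s)" "pi * (3 / 2 * s) \<le> pi * 2"
    using assms by (auto intro!: mult_left_mono)
  then have "0 \<le> cos (pi / 2 * s)" "sin (pi * (3 / 2 * s)) \<le> 0"
    by (intro cos_ge_zero sin_le_zero; use pi_gt_zero in linarith)+
  then show ?thesis
    by (simp add: profile_at_1_def mult_ac mult_nonneg_nonpos)
qed

definition lower_bound_at_1 :: "real \<Rightarrow> real" where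
  "lower_bound_at_1 r = (9 * exp (- 2 * r) - exp (2 * r)) / (4 * pi\<^sup>2)"

lemma lower_bound_at_1_pos:
  assumes "r < ln (sqrt 3)"
  shows "0 < lower_bound_at_1 r"
proof -
  have "4 * r < ln 9"
    using assms ln_realpow[of 3 2] by (simp add: ln_sqrt)
  then have "exp (4 * r) < 9"
    by (metis exp_less_cancel_iff exp_ln zero_less_numeral)
  moreover have "exp (2 * r) = exp (- 2 * r) * exp (4 * r)"
    by (simp flip: exp_add)
  ultimately show ?thesis
    by (simp add: lower_bound_at_1_def)
qed

lemma hammerstein_op_at_1_eq:
  "hammerstein_op u 1 = 2 / pi * integral {0..1} (\<lambda>s. profile_at_1 s * exp_density u s)"
proof -
  have "hammerstein_op u 1 = integral {0..1} (\<lambda>s. 2 / pi * (profile_at_1 s * exp_density u s))"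
    unfolding hammerstein_op_def
    by (intro integral_cong) (simp add: kern_eq profile_at_1_def max_absorb1 min_absorb2)
  then show ?thesis
    by simp
qed

lemma hammerstein_op_at_1_ge:
  assumes u: "u \<in> C01_ball r"
  shows "lower_bound_at_1 r \<le> hammerstein_op u 1"
proof -
  define q where "q s = profile_at_1 s * exp_density u s" for s
  have cont: "continuous_on {0..1} q"
    unfolding q_def profile_at_1_def by (intro continuous_intros continuous_on_exp_density[OF u])
  have int_q: "q integrable_on {a..b}" if "{a..b} \<subseteq> {0..1}" for a b
    by (rule integrable_continuous_interval[OF continuous_on_subset[OF cont that]])
  have int_profile: "(\<lambda>s. c * profile_at_1 s) integrable_on {a..b}" for a b c
    unfolding profile_at_1_def by (intro integrable_continuous_interval continuous_intros)
  have split: "integral {0..1} q = integral {0..2/3} q + integral {2/3..1} q"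
    by (rule Henstock_Kurzweil_Integration.integral_combine[symmetric]) (auto intro: int_q)
  \<comment> \<open>Bound the density from below where the profile is positive and from above where it is negative.\<close>
  have "integral {0..2/3} (\<lambda>s. exp (- 2 * r) * profile_at_1 s) \<le> integral {0..2/3} q"
  proof (rule integral_le[OF int_profile int_q])
    fix s :: real assume s: "s \<in> {0..2/3}"
    then show "exp (- 2 * r) * profile_at_1 s \<le> q s"
      using exp_density_bounds(1)[OF u] profile_at_1_nonneg[OF s]
      by (simp add: q_def mult.commute mult_left_mono)
  qed auto
  moreover have "integral {2/3..1} (\<lambda>s. exp (2 * r) * profile_at_1 s) \<le> integral {2/3..1} q"
  proof (rule integral_le[OF int_profile int_q])
    fix s :: real assume s: "s \<in> {2/3..1}"
    then show "exp (2 * r) * profile_at_1 s \<le> q s"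
      using exp_density_bounds(2)[OF u] profile_at_1_nonpos[OF s]
      by (simp add: q_def mult.commute mult_left_mono_neg)
  qed auto
  ultimately have "9 * exp (- 2 * r) / (8 * pi) - exp (2 * r) / (8 * pi) \<le> integral {0..1} q"
    using split integral_profile_at_1_positive_part integral_profile_at_1_negative_part by simp
  then have "2 / pi * (9 * exp (- 2 * r) / (8 * pi) - exp (2 * r) / (8 * pi)) \<le> 2 / pi * integral {0..1} q"
    by (intro mult_left_mono) auto
  moreover have "lower_bound_at_1 r = 2 / pi * (9 * exp (- 2 * r) / (8 * pi) - exp (2 * r) / (8 * pi))"
    by (simp add: lower_bound_at_1_def power2_eq_square field_simps)
  moreover have "2 / pi * integral {0..1} q = hammerstein_op u 1"
    by (simp add: hammerstein_op_at_1_eq q_def[abs_def])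
  ultimately show ?thesis
    by simp
qed

section \<open>Solutions of prescribed norm\<close>

lemma supnorm01_cong: "(\<And>t. t \<in> {0..1} \<Longrightarrow> f t = g t) \<Longrightarrow> supnorm01 f = supnorm01 g"
  unfolding supnorm01_def by (intro SUP_cong) auto

lemma abs_le_supnorm01:
  assumes "continuous_on {0..1} f" "t \<in> {0..1}"
  shows "\<bar>f t\<bar> \<le> supnorm01 f"
proof -
  have "compact ((\<lambda>t. \<bar>f t\<bar>) ` {0..1})"
    by (intro compact_continuous_image continuous_intros assms(1)) auto
  then have "bdd_above ((\<lambda>t. \<bar>f t\<bar>) ` {0..1})"
    by (intro bounded_imp_bdd_above compact_imp_bounded)
  then show ?thesis
    unfolding supnorm01_def using assms(2) by (intro cSUP_upper)
qed

lemma supnorm01_le: "(\<And>t. t \<in> {0..1} \<Longrightarrow> \<bar>f t\<bar> \<le> M) \<Longrightarrow> supnorm01 f \<le> M"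
  unfolding supnorm01_def by (rule cSUP_least) auto

lemma abs_supnorm01_diff_le:
  assumes f: "continuous_on {0..1} f" and g: "continuous_on {0..1} g"
    and d: "\<And>t. t \<in> {0..1} \<Longrightarrow> \<bar>f t - g t\<bar> \<le> c"
  shows "\<bar>supnorm01 f - supnorm01 g\<bar> \<le> c"
proof -
  have "supnorm01 f \<le> supnorm01 g + c"
    using abs_le_supnorm01[OF g] d by (intro supnorm01_le) fastforce
  moreover have "supnorm01 g \<le> supnorm01 f + c"
    using abs_le_supnorm01[OF f] d by (intro supnorm01_le) fastforce
  ultimately show ?thesis
    by linarith
qed

lemma supnorm01_cmult:
  assumes f: "continuous_on {0..1} f"
  shows "supnorm01 (\<lambda>t. c * f t) = \<bar>c\<bar> * supnorm01 f"
proof (rule antisym)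
  show "supnorm01 (\<lambda>t. c * f t) \<le> \<bar>c\<bar> * supnorm01 f"
    using abs_le_supnorm01[OF f] by (intro supnorm01_le) (simp add: abs_mult mult_left_mono)
  have cf: "continuous_on {0..1} (\<lambda>t. c * f t)"
    using f by (intro continuous_intros)
  show "\<bar>c\<bar> * supnorm01 f \<le> supnorm01 (\<lambda>t. c * f t)"
  proof (cases "c = 0")
    case True
    then show ?thesis
      using abs_le_supnorm01[OF cf, of 0] by simp
  next
    case False
    have "supnorm01 f \<le> supnorm01 (\<lambda>t. c * f t) / \<bar>c\<bar>"
    proof (rule supnorm01_le)
      fix t :: real assume "t \<in> {0..1}"
      then have "\<bar>c\<bar> * \<bar>f t\<bar> \<le> supnorm01 (\<lambda>t. c * f t)"
        using abs_le_supnorm01[OF cf] by (simp add: abs_mult)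
      then show "\<bar>f t\<bar> \<le> supnorm01 (\<lambda>t. c * f t) / \<bar>c\<bar>"
        using False by (simp add: field_simps mult.commute)
    qed
    then show ?thesis
      using False by (simp add: field_simps mult.commute)
  qed
qed

lemma hammerstein_op_in_C01_ball:
  assumes "u \<in> C01_ball r"
  shows "hammerstein_op u \<in> C01_ball (exp (2 * r))"
proof (rule lipschitz_in_C01_ball)
  show "\<bar>hammerstein_op u t\<bar> \<le> exp (2 * r)" for t
    using assms by (rule abs_hammerstein_op_le)
  show "\<bar>hammerstein_op u t - hammerstein_op u t'\<bar> \<le> 2 * exp (2 * r) * \<bar>t - t'\<bar>" for t t'
    using assms by (rule hammerstein_op_lipschitz_arg)
qed

lemma lower_bound_at_1_le_supnorm01:
  assumes "u \<in> C01_ball r"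
  shows "lower_bound_at_1 r \<le> supnorm01 (hammerstein_op u)"
  using hammerstein_op_at_1_ge[OF assms]
    abs_le_supnorm01[OF C01_ballD(1)[OF hammerstein_op_in_C01_ball[OF assms]], of 1]
  by simp

definition normalized_op :: "(real \<Rightarrow> real) \<Rightarrow> real \<Rightarrow> real" where
  "normalized_op u t = hammerstein_op u t / supnorm01 (hammerstein_op u)"

context
  fixes r :: real
  assumes r: "r < ln (sqrt 3)"
begin

lemma abs_normalized_op_le:
  assumes u: "u \<in> C01_ball r" and t: "t \<in> {0..1}"
  shows "\<bar>normalized_op u t\<bar> \<le> 1"
  using abs_le_supnorm01[OF C01_ballD(1)[OF hammerstein_op_in_C01_ball[OF u]] t]
    lower_bound_at_1_le_supnorm01[OF u] lower_bound_at_1_pos[OF r]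
  by (simp add: normalized_op_def divide_le_eq_1)

lemma normalized_op_lipschitz_arg:
  assumes u: "u \<in> C01_ball r"
  shows "\<bar>normalized_op u t - normalized_op u t'\<bar> \<le> 2 * exp (2 * r) / lower_bound_at_1 r * \<bar>t - t'\<bar>"
proof -
  note N = lower_bound_at_1_le_supnorm01[OF u] lower_bound_at_1_pos[OF r]
  have "\<bar>normalized_op u t - normalized_op u t'\<bar>
      = \<bar>hammerstein_op u t - hammerstein_op u t'\<bar> / supnorm01 (hammerstein_op u)"
    using N by (simp add: normalized_op_def flip: diff_divide_distrib)
  also have "\<dots> \<le> 2 * exp (2 * r) * \<bar>t - t'\<bar> / lower_bound_at_1 r"
    using hammerstein_op_lipschitz_arg[OF u] N by (intro frac_le) auto
  finally show ?thesis
    by simp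
qed

lemma normalized_op_lipschitz_fun:
  assumes u: "u \<in> C01_ball r" and v: "v \<in> C01_ball r"
    and d: "\<And>s. s \<in> {0..1} \<Longrightarrow> \<bar>u s - v s\<bar> \<le> d"
  shows "\<bar>normalized_op u t - normalized_op v t\<bar>
    \<le> (2 * exp (4 * r) / lower_bound_at_1 r + 2 * exp (6 * r) / (lower_bound_at_1 r)\<^sup>2) * d"
proof -
  define \<beta> where "\<beta> = lower_bound_at_1 r"
  have \<beta>: "0 < \<beta>"
    using lower_bound_at_1_pos[OF r] by (simp add: \<beta>_def)
  have "\<bar>normalized_op u t - normalized_op v t\<bar>
      \<le> \<bar>hammerstein_op u t - hammerstein_op v t\<bar> / \<beta>
        + \<bar>hammerstein_op v t\<bar> * \<bar>supnorm01 (hammerstein_op u) - supnorm01 (hammerstein_op v)\<bar> / \<beta>\<^sup>2"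
    unfolding normalized_op_def \<beta>_def
    by (rule abs_diff_divide_le[OF lower_bound_at_1_pos[OF r]
          lower_bound_at_1_le_supnorm01[OF u] lower_bound_at_1_le_supnorm01[OF v]])
  also have "\<dots> \<le> 2 * exp (4 * r) * d / \<beta> + exp (2 * r) * (2 * exp (4 * r) * d) / \<beta>\<^sup>2"
    using hammerstein_op_lipschitz_fun[OF u v d] abs_hammerstein_op_le[OF v]
      abs_supnorm01_diff_le[OF C01_ballD(1)[OF hammerstein_op_in_C01_ball[OF u]]
        C01_ballD(1)[OF hammerstein_op_in_C01_ball[OF v]] hammerstein_op_lipschitz_fun[OF u v d]] \<beta>
    by (intro add_mono divide_right_mono mult_mono) auto
  also have "\<dots> = (2 * exp (4 * r) / \<beta> + 2 * exp (6 * r) / \<beta>\<^sup>2) * d"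
    by (simp add: field_simps flip: exp_add)
  finally show ?thesis
    by (simp add: \<beta>_def)
qed

lemma scaled_normalized_op_self_map:
  assumes c: "\<bar>c\<bar> = r" "0 < r"
  shows "C01_ball_self_map (\<lambda>u t. c * normalized_op u t) r
    (r * (2 * exp (2 * r) / lower_bound_at_1 r))
    (r * (2 * exp (4 * r) / lower_bound_at_1 r + 2 * exp (6 * r) / (lower_bound_at_1 r)\<^sup>2))"
proof
  show "\<bar>c * normalized_op u t\<bar> \<le> r" if "u \<in> C01_ball r" "t \<in> {0..1}" for u t
    using abs_normalized_op_le[OF that] c by (simp add: abs_mult mult_left_le)
  show "\<bar>c * normalized_op u t - c * normalized_op u t'\<bar> \<le> r * (2 * exp (2 * r) / lower_bound_at_1 r) * \<bar>t - t'\<bar>"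
    if "u \<in> C01_ball r" for u and t t' :: real
    using mult_left_mono[OF normalized_op_lipschitz_arg[OF that, of t t'], of r] c
    by (simp add: abs_mult mult_ac flip: right_diff_distrib)
  show "\<bar>c * normalized_op u t - c * normalized_op v t\<bar>
      \<le> r * (2 * exp (4 * r) / lower_bound_at_1 r + 2 * exp (6 * r) / (lower_bound_at_1 r)\<^sup>2) * d"
    if "u \<in> C01_ball r" "v \<in> C01_ball r" "\<And>s. s \<in> {0..1} \<Longrightarrow> \<bar>u s - v s\<bar> \<le> d" for u v and d t :: real
    using mult_left_mono[OF normalized_op_lipschitz_fun[OF that, of t], of r] c
    by (simp add: abs_mult mult_ac flip: right_diff_distrib)
qed (rule c)

end

lemma exists_solution_with_norm:
  assumes "0 < \<bar>c\<bar>" "\<bar>c\<bar> < ln (sqrt 3)"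
  shows "\<exists>lam u. sgn lam = sgn c \<and> supnorm01 u = \<bar>c\<bar> \<and> solves lam u"
proof -
  obtain y where y: "y \<in> C01_ball \<bar>c\<bar>" and fix_y: "\<And>t. t \<in> {0..1} \<Longrightarrow> c * normalized_op y t = y t"
    using C01_ball_self_map.fixed_point[OF scaled_normalized_op_self_map[OF assms(2) refl assms(1)]] by blast
  define N where "N = supnorm01 (hammerstein_op y)"
  have N: "0 < N"
    using lower_bound_at_1_le_supnorm01[OF y] lower_bound_at_1_pos[OF assms(2)] by (simp add: N_def)
  have y_eq: "y t = c / N * hammerstein_op y t" if "t \<in> {0..1}" for t
    using fix_y[OF that] by (simp add: normalized_op_def N_def)
  have "solves (c / N) y"
    using C01_ballD(1)[OF y] y_eq by (simp add: solves_iff)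
  moreover have "supnorm01 y = \<bar>c\<bar>"
  proof -
    have "supnorm01 y = supnorm01 (\<lambda>t. c / N * hammerstein_op y t)"
      using y_eq by (rule supnorm01_cong)
    also have "\<dots> = \<bar>c / N\<bar> * N"
      unfolding N_def by (rule supnorm01_cmult[OF C01_ballD(1)[OF hammerstein_op_in_C01_ball[OF y]]])
    finally show ?thesis
      using N by simp
  qed
  moreover have "sgn (c / N) = sgn c"
    using N by simp
  ultimately show ?thesis
    by blast
qed

lemma abs_eigenvalue_le:
  assumes sol: "solves lam u" and norm: "supnorm01 u = r" and r: "r < ln (sqrt 3)"
  shows "\<bar>lam\<bar> \<le> r / lower_bound_at_1 r"
proof -
  have cont: "continuous_on {0..1} u" and u1: "u 1 = lam * hammerstein_op u 1"
    using sol by (auto simp: solves_iff)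
  have u: "u \<in> C01_ball r"
    using abs_le_supnorm01[OF cont] cont norm by (auto simp: C01_ball_def)
  have \<beta>: "0 < lower_bound_at_1 r" "lower_bound_at_1 r \<le> hammerstein_op u 1"
    using lower_bound_at_1_pos[OF r] hammerstein_op_at_1_ge[OF u] by auto
  have "\<bar>lam\<bar> * lower_bound_at_1 r \<le> \<bar>lam\<bar> * hammerstein_op u 1"
    using \<beta> by (intro mult_left_mono) auto
  also have "\<dots> = \<bar>u 1\<bar>"
    using u1 \<beta> by (simp add: abs_mult)
  also have "\<dots> \<le> r"
    using C01_ballD(2)[OF u, of 1] by simp
  finally show ?thesis
    using \<beta> by (simp add: field_simps)
qed

theorem mainTheorem4:
  fixes \<rho> :: real
  assumes "0 < \<rho>" and "\<rho> < ln (sqrt 3)"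
  shows "(\<exists>lp up ln' un. lp > 0 \<and> ln' < 0 \<and>
            supnorm01 up = \<rho> \<and> supnorm01 un = \<rho> \<and>
            solves lp up \<and> solves ln' un)
       \<and> (\<forall>lam u. solves lam u \<and> supnorm01 u = \<rho> \<longrightarrow>
            \<bar>lam\<bar> \<le> 4 * pi^2 * \<rho> / (9 * exp (-2 * \<rho>) - exp (2 * \<rho>)))"
proof -
  obtain lp up where "sgn lp = 1" "supnorm01 up = \<rho>" "solves lp up"
    using exists_solution_with_norm[of \<rho>] assms by auto
  moreover obtain ln' un where "sgn ln' = - 1" "supnorm01 un = \<rho>" "solves ln' un"
    using exists_solution_with_norm[of "- \<rho>"] assms by auto
  moreover have "\<rho> / lower_bound_at_1 \<rho> = 4 * pi^2 * \<rho> / (9 * exp (-2 * \<rho>) - exp (2 * \<rho>))"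
    by (simp add: lower_bound_at_1_def)
  ultimately show ?thesis
    using abs_eigenvalue_le[OF _ _ assms(2)] by (metis sgn_1_pos sgn_1_neg)
qed

end
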